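(* Let $\beta\in\mathbb{C}$ and $N\geq2$ with $\beta^N=1$ and $\beta^k\neq1$ for $k=1,\dots,N-1$. Let $m\in\mathrm{Hol}(\mathbb{D})$, $m\not\equiv0$, $T:\mathrm{Hol}(\mathbb{D})\to\mathrm{Hol}(\mathbb{D})$ given by $(Tf)(z)=m(z)f(\beta z)$, and $m_N(z)=m(z)m(\beta z)\cdots m(\beta^{N-1}z)$. Then $\sigma(T)=\{\lambda\in\mathbb{C}:\lambda^N\in m_N(\mathbb{D})\}$.
   Context: $\mathbb{D}$ is the open unit disc, $\mathrm{Hol}(\mathbb{D})$ the Fréchet space of holomorphic functions on $\mathbb{D}$. $\sigma(T)$ is the set of $\lambda\in\mathbb{C}$ such that $\lambda\mathrm{Id}-T$ is not bijective. *)

theory Defs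
  imports "HOL-Complex_Analysis.Complex_Analysis"
begin

text \<open>Hol(D): holomorphic functions on the open unit disc. Each element is represented
canonically by a function holomorphic on the disc and equal to 0 outside it.\<close>
definition Hol_disc :: "(complex \<Rightarrow> complex) set" where
  "Hol_disc = {f. f holomorphic_on ball 0 1 \<and> (\<forall>z. z \<notin> ball 0 1 \<longrightarrow> f z = 0)}"

definition wcomp_op :: "complex \<Rightarrow> (complex \<Rightarrow> complex) \<Rightarrow> (complex \<Rightarrow> complex) \<Rightarrow> (complex \<Rightarrow> complex)" where
  "wcomp_op \<beta> m f = (\<lambda>z. if z \<in> ball 0 1 then m z * f (\<beta> * z) else 0)"

definition spectrum_Hol :: "((complex \<Rightarrow> complex) \<Rightarrow> (complex \<Rightarrow> complex)) \<Rightarrow> complex set" where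
  "spectrum_Hol T = {c. \<not> bij_betw (\<lambda>f. \<lambda>z. c * f z - T f z) Hol_disc Hol_disc}"

end

theory Submission
  imports Defs
begin

(* Since (T^k f)(z) = m_k(z) f(beta^k z) and
   beta^N = 1, the operator identity (c - T) S = S (c - T) = c^N - T^N, where
   S = sum_{k<N} c^(N-1-k) T^k, says that c Id - T composed with S on either side is
   multiplication by c^N - m_N. So c Id - T is invertible when c^N - m_N has no zero in the disc.
   Conversely, let c^N = m_N(z0); then c Id - T is not onto. For c = 0 its range vanishes at a
   zero of m. For z0 <> 0, S (c f - T f) vanishes at z0, whereas S g (z0) = c^(N-1) g(z0) <> 0
   for a polynomial g vanishing at the other orbit points beta^k z0. For z0 = 0 we have
   c = beta^j m(0), and the relation (beta c - T)(z f) = beta z (c f - T f) carries surjectivity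
   from beta c down to c, hence down to m(0), where every c f - T f vanishes at 0. *)

definition fun_linear :: "(('a \<Rightarrow> 'b::ring_1) \<Rightarrow> 'a \<Rightarrow> 'b) \<Rightarrow> bool" where
  "fun_linear T \<longleftrightarrow> (\<forall>a f g. T (\<lambda>z. a * f z - g z) = (\<lambda>z. a * T f z - T g z))"

definition scaled_id_minus ::
    "'b \<Rightarrow> (('a \<Rightarrow> 'b) \<Rightarrow> 'a \<Rightarrow> 'b) \<Rightarrow> ('a \<Rightarrow> 'b) \<Rightarrow> 'a \<Rightarrow> 'b::ring" where
  "scaled_id_minus c T f = (\<lambda>z. c * f z - T f z)"

definition geom_sum_op ::
    "'b \<Rightarrow> (('a \<Rightarrow> 'b) \<Rightarrow> 'a \<Rightarrow> 'b) \<Rightarrow> nat \<Rightarrow> ('a \<Rightarrow> 'b) \<Rightarrow> 'a \<Rightarrow> 'b::comm_ring_1" where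
  "geom_sum_op c T n f = (\<lambda>z. \<Sum>k<n. c ^ (n - 1 - k) * (T ^^ k) f z)"

lemma fun_linearD: "fun_linear T \<Longrightarrow> T (\<lambda>z. a * f z - g z) = (\<lambda>z. a * T f z - T g z)"
  by (simp add: fun_linear_def)

lemma fun_linear_zero:
  assumes "fun_linear T"
  shows "T (\<lambda>z. 0) = (\<lambda>z. 0)"
  using fun_linearD[OF assms, of 1 "\<lambda>z. 0" "\<lambda>z. 0"] by simp

lemma fun_linear_funpow:
  assumes "fun_linear T"
  shows "fun_linear (T ^^ k)"
  by (induction k) (simp_all add: fun_linear_def fun_linearD[OF assms])

lemma fun_linear_uminus:
  assumes "fun_linear T"
  shows "T (\<lambda>z. - f z) = (\<lambda>z. - T f z)"
  using fun_linearD[OF assms, of 0 f f] by simp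

lemma fun_linear_add:
  assumes "fun_linear T"
  shows "T (\<lambda>z. f z + g z) = (\<lambda>z. T f z + T g z)"
  using fun_linearD[OF assms, of 1 f "\<lambda>z. - g z"] by (simp add: fun_linear_uminus[OF assms])

lemma fun_linear_scale:
  assumes "fun_linear T"
  shows "T (\<lambda>z. a * f z) = (\<lambda>z. a * T f z)"
  using fun_linearD[OF assms, of a f "\<lambda>z. 0"] by (simp add: fun_linear_zero[OF assms])

lemma fun_linear_sum:
  assumes "fun_linear T"
  shows "T (\<lambda>z. \<Sum>k\<in>A. a k * g k z) = (\<lambda>z. \<Sum>k\<in>A. a k * T (g k) z)"
proof (induction A rule: infinite_finite_induct)
  case (insert k A)
  then show ?case
    using fun_linear_add[OF assms, of "\<lambda>z. a k * g k z" "\<lambda>z. \<Sum>j\<in>A. a j * g j z"]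
    by (simp add: fun_linear_scale[OF assms])
qed (simp_all add: fun_linear_zero[OF assms])

lemma geom_sum_op_scaled_id_minus:
  assumes "fun_linear T"
  shows "geom_sum_op c T n (scaled_id_minus c T f) z = c ^ n * f z - (T ^^ n) f z"
proof -
  define a where "a k = c ^ (n - k) * (T ^^ k) f z" for k
  have "c ^ (n - 1 - k) * (T ^^ k) (scaled_id_minus c T f) z = a k - a (Suc k)" if "k < n" for k
  proof -
    have "c ^ (n - k) = c ^ (n - 1 - k) * c"
      using that by (simp flip: power_Suc2 add: Suc_diff_Suc)
    then show ?thesis
      using fun_linearD[OF fun_linear_funpow[OF assms], of k c f "T f"]
      by (simp add: a_def scaled_id_minus_def funpow_Suc_right algebra_simps del: funpow.simps)
  qed
  then have "geom_sum_op c T n (scaled_id_minus c T f) z = (\<Sum>k<n. a k - a (Suc k))"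
    by (simp add: geom_sum_op_def)
  also have "\<dots> = a 0 - a n"
    by (rule sum_lessThan_telescope')
  also have "\<dots> = c ^ n * f z - (T ^^ n) f z"
    by (simp add: a_def)
  finally show ?thesis .
qed

lemma scaled_id_minus_geom_sum_op:
  assumes "fun_linear T"
  shows "scaled_id_minus c T (geom_sum_op c T n f) z = c ^ n * f z - (T ^^ n) f z"
proof -
  define a where "a k = c ^ (n - k) * (T ^^ k) f z" for k
  have "c * geom_sum_op c T n f z = (\<Sum>k<n. a k)"
    unfolding geom_sum_op_def a_def sum_distrib_left
    by (intro sum.cong) (auto simp: Suc_diff_Suc simp flip: mult.assoc power_Suc)
  moreover have "T (geom_sum_op c T n f) z = (\<Sum>k<n. a (Suc k))"
    by (simp add: geom_sum_op_def fun_linear_sum[OF assms] a_def)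
  ultimately have "scaled_id_minus c T (geom_sum_op c T n f) z = (\<Sum>k<n. a k - a (Suc k))"
    by (simp add: scaled_id_minus_def sum_subtractf)
  also have "\<dots> = a 0 - a n"
    by (rule sum_lessThan_telescope')
  also have "\<dots> = c ^ n * f z - (T ^^ n) f z"
    by (simp add: a_def)
  finally show ?thesis .
qed

definition restrict_disc :: "(complex \<Rightarrow> complex) \<Rightarrow> complex \<Rightarrow> complex" where
  "restrict_disc f = (\<lambda>z. if z \<in> ball 0 1 then f z else 0)"

lemma restrict_disc_in_Hol_disc:
  assumes "f holomorphic_on ball 0 1"
  shows "restrict_disc f \<in> Hol_disc"
proof -
  have "restrict_disc f holomorphic_on ball 0 1"
    using assms by (rule holomorphic_transform) (simp add: restrict_disc_def)
  then show ?thesis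
    by (simp add: Hol_disc_def restrict_disc_def)
qed

lemma Hol_disc_holomorphic: "f \<in> Hol_disc \<Longrightarrow> f holomorphic_on ball 0 1"
  by (simp add: Hol_disc_def)

lemma Hol_disc_outside: "f \<in> Hol_disc \<Longrightarrow> z \<notin> ball 0 1 \<Longrightarrow> f z = 0"
  by (simp add: Hol_disc_def)

lemma Hol_disc_eqI:
  assumes "f \<in> Hol_disc" "g \<in> Hol_disc" "\<And>z. z \<in> ball 0 1 \<Longrightarrow> f z = g z"
  shows "f = g"
  using assms(3) Hol_disc_outside[OF assms(1)] Hol_disc_outside[OF assms(2)] by (metis ext)

lemma continuous_on_eq_at_if_eq_punctured:
  fixes f g :: "'a::{perfect_space,t2_space} \<Rightarrow> 'b::t2_space"
  assumes "continuous_on S f" "continuous_on S g" "open S" "a \<in> S"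
    and "\<And>z. z \<in> S \<Longrightarrow> z \<noteq> a \<Longrightarrow> f z = g z"
  shows "f a = g a"
proof -
  have "isCont f a" "isCont g a"
    using assms(1-4) continuous_on_eq_continuous_at by blast+
  then have f_lim: "f \<midarrow>a\<rightarrow> f a" and g_lim: "g \<midarrow>a\<rightarrow> g a"
    by (simp_all add: isCont_def)
  have "eventually (\<lambda>z. f z = g z) (at a)"
    unfolding eventually_at_topological using assms(3-5) by blast
  with f_lim have "g \<midarrow>a\<rightarrow> f a"
    by (rule Lim_transform_eventually)
  from this g_lim show ?thesis
    by (rule LIM_unique)
qed

lemma Hol_disc_eq_if_eq_off_0:
  assumes "f \<in> Hol_disc" "g \<in> Hol_disc" "\<And>z. z \<noteq> 0 \<Longrightarrow> f z = g z"
  shows "f = g"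
proof
  fix z
  have "continuous_on (ball 0 1) f" "continuous_on (ball 0 1) g"
    using assms(1,2) by (simp_all add: Hol_disc_holomorphic holomorphic_on_imp_continuous_on)
  then have "f 0 = g 0"
    by (rule continuous_on_eq_at_if_eq_punctured) (simp_all add: assms(3))
  with assms(3) show "f z = g z"
    by (cases "z = 0") simp_all
qed

lemma Hol_disc_times_z: "f \<in> Hol_disc \<Longrightarrow> (\<lambda>z. c * z * f z) \<in> Hol_disc"
  by (auto simp: Hol_disc_def intro!: holomorphic_intros)

lemma Hol_disc_divide_z:
  assumes "u \<in> Hol_disc" "u 0 = 0"
  obtains f where "f \<in> Hol_disc" "u = (\<lambda>z. z * f z)"
proof
  define q where "q z = (if z = 0 then deriv u 0 else (u z - u 0) / (z - 0))" for z
  have "q holomorphic_on ball 0 1"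
    unfolding q_def using Hol_disc_holomorphic[OF assms(1)] by (rule pole_lemma_open) simp
  then show "restrict_disc q \<in> Hol_disc"
    by (rule restrict_disc_in_Hol_disc)
  show "u = (\<lambda>z. z * restrict_disc q z)"
    using assms Hol_disc_outside[OF assms(1)] by (auto simp: restrict_disc_def q_def)
qed

lemma Hol_disc_not_surj_if_vanishing:
  assumes "z \<in> ball 0 1" "\<And>f. f \<in> Hol_disc \<Longrightarrow> L f z = 0"
  shows "\<not> Hol_disc \<subseteq> L ` Hol_disc"
proof
  assume surj: "Hol_disc \<subseteq> L ` Hol_disc"
  have "restrict_disc (\<lambda>z. 1) \<in> Hol_disc"
    by (rule restrict_disc_in_Hol_disc[OF holomorphic_on_const])
  with surj obtain f where "f \<in> Hol_disc" "restrict_disc (\<lambda>z. 1) = L f"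
    by (auto elim: imageE)
  then have "L f z = restrict_disc (\<lambda>z. 1) z" "L f z = 0"
    using assms(2) by simp_all
  with assms(1) show False
    by (simp add: restrict_disc_def)
qed

lemma Hol_disc_separating_polynomial:
  assumes "z\<^sub>0 \<in> ball 0 1" "finite W" "z\<^sub>0 \<notin> W"
  obtains g where "g \<in> Hol_disc" "g z\<^sub>0 \<noteq> 0" "\<And>w. w \<in> W \<Longrightarrow> g w = 0"
proof
  let ?g = "restrict_disc (\<lambda>z. \<Prod>w\<in>W. z - w)"
  show "?g \<in> Hol_disc"
    by (intro restrict_disc_in_Hol_disc holomorphic_intros)
  show "?g z\<^sub>0 \<noteq> 0"
    using assms by (auto simp: restrict_disc_def)
  show "?g w = 0" if "w \<in> W" for w
    using that assms(2) by (simp add: restrict_disc_def)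
qed

definition orbit_prod :: "complex \<Rightarrow> (complex \<Rightarrow> complex) \<Rightarrow> nat \<Rightarrow> complex \<Rightarrow> complex" where
  "orbit_prod \<beta> m k z = (\<Prod>i<k. m (\<beta> ^ i * z))"

lemma orbit_prod_Suc: "orbit_prod \<beta> m (Suc k) z = m z * orbit_prod \<beta> m k (\<beta> * z)"
  unfolding orbit_prod_def prod.lessThan_Suc_shift by (simp add: mult_ac)

lemma mult_mem_unit_ball:
  fixes \<beta> z :: complex
  assumes "norm \<beta> \<le> 1" "z \<in> ball 0 1"
  shows "\<beta> * z \<in> ball 0 1"
proof -
  from assms have "norm \<beta> * norm z \<le> norm z" "norm z < 1"
    using mult_right_mono[of "norm \<beta>" 1 "norm z"] by auto
  then show ?thesis
    by (simp add: norm_mult)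
qed

lemma holomorphic_on_compose_scaling:
  assumes "norm \<beta> \<le> 1" "g holomorphic_on ball 0 1"
  shows "(\<lambda>z. g (\<beta> * z)) holomorphic_on ball 0 1"
proof -
  have "g \<circ> (\<lambda>z. \<beta> * z) holomorphic_on ball 0 1"
    using assms mult_mem_unit_ball
    by (intro holomorphic_on_compose_gen[where t = "ball 0 1"] holomorphic_intros) auto
  then show ?thesis
    by (simp add: o_def)
qed

lemma fun_linear_wcomp_op: "fun_linear (wcomp_op \<beta> m)"
  by (simp add: fun_linear_def wcomp_op_def fun_eq_iff algebra_simps)

lemma wcomp_op_Hol_disc:
  assumes "norm \<beta> \<le> 1" "m holomorphic_on ball 0 1" "f \<in> Hol_disc"
  shows "wcomp_op \<beta> m f \<in> Hol_disc"
proof -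
  have "(\<lambda>z. m z * f (\<beta> * z)) holomorphic_on ball 0 1"
    using assms(2) holomorphic_on_compose_scaling[OF assms(1) Hol_disc_holomorphic[OF assms(3)]]
    by (intro holomorphic_intros)
  then show ?thesis
    using restrict_disc_in_Hol_disc by (simp add: wcomp_op_def restrict_disc_def)
qed

lemma funpow_wcomp_op:
  assumes "norm \<beta> \<le> 1" "z \<in> ball 0 1"
  shows "(wcomp_op \<beta> m ^^ k) f z = orbit_prod \<beta> m k z * f (\<beta> ^ k * z)"
  using assms(2)
proof (induction k arbitrary: z)
  case (Suc k)
  have "(wcomp_op \<beta> m ^^ Suc k) f z = m z * (wcomp_op \<beta> m ^^ k) f (\<beta> * z)"
    using Suc.prems by (simp add: wcomp_op_def[of \<beta> m "(wcomp_op \<beta> m ^^ k) f"])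
  also have "\<dots> = m z * (orbit_prod \<beta> m k (\<beta> * z) * f (\<beta> ^ k * (\<beta> * z)))"
    using Suc mult_mem_unit_ball[OF assms(1)] by simp
  also have "\<dots> = orbit_prod \<beta> m (Suc k) z * f (\<beta> ^ Suc k * z)"
    by (simp add: orbit_prod_Suc mult_ac)
  finally show ?case .
qed (simp add: orbit_prod_def)

lemma orbit_prod_holomorphic:
  assumes "norm \<beta> \<le> 1" "m holomorphic_on ball 0 1"
  shows "orbit_prod \<beta> m k holomorphic_on ball 0 1"
  unfolding orbit_prod_def[abs_def] using assms
  by (intro holomorphic_on_prod holomorphic_on_compose_scaling) (auto simp: norm_power power_le_one)

lemma funpow_Hol_disc:
  assumes "\<And>f. f \<in> Hol_disc \<Longrightarrow> T f \<in> Hol_disc" "f \<in> Hol_disc"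
  shows "(T ^^ k) f \<in> Hol_disc"
  by (induction k) (simp_all add: assms)

lemma geom_sum_op_Hol_disc:
  assumes "\<And>f. f \<in> Hol_disc \<Longrightarrow> T f \<in> Hol_disc" "f \<in> Hol_disc"
  shows "geom_sum_op c T n f \<in> Hol_disc"
  using funpow_Hol_disc[OF assms]
  by (auto simp: geom_sum_op_def Hol_disc_def intro!: holomorphic_intros)

lemma scaled_id_minus_Hol_disc:
  assumes "\<And>f. f \<in> Hol_disc \<Longrightarrow> T f \<in> Hol_disc" "f \<in> Hol_disc"
  shows "scaled_id_minus c T f \<in> Hol_disc"
  using assms by (auto simp: scaled_id_minus_def Hol_disc_def intro!: holomorphic_intros)

lemma norm_eq_1_if_power_eq_1:
  fixes \<beta> :: complex
  shows "\<beta> ^ n = 1 \<Longrightarrow> n > 0 \<Longrightarrow> norm \<beta> = 1"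
  using power_eq_1_iff by blast

lemma wcomp_geom_sum_factorisation:
  assumes "\<beta> ^ n = 1" "n > 0" "z \<in> ball 0 1"
  shows "geom_sum_op c (wcomp_op \<beta> m) n (scaled_id_minus c (wcomp_op \<beta> m) f) z
           = (c ^ n - orbit_prod \<beta> m n z) * f z"
    and "scaled_id_minus c (wcomp_op \<beta> m) (geom_sum_op c (wcomp_op \<beta> m) n f) z
           = (c ^ n - orbit_prod \<beta> m n z) * f z"
proof -
  have "(wcomp_op \<beta> m ^^ n) f z = orbit_prod \<beta> m n z * f z"
    using assms funpow_wcomp_op[of \<beta> z] norm_eq_1_if_power_eq_1 by simp
  then show "geom_sum_op c (wcomp_op \<beta> m) n (scaled_id_minus c (wcomp_op \<beta> m) f) z
           = (c ^ n - orbit_prod \<beta> m n z) * f z"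
    and "scaled_id_minus c (wcomp_op \<beta> m) (geom_sum_op c (wcomp_op \<beta> m) n f) z
           = (c ^ n - orbit_prod \<beta> m n z) * f z"
    by (simp_all add: geom_sum_op_scaled_id_minus scaled_id_minus_geom_sum_op
        fun_linear_wcomp_op algebra_simps)
qed

lemma wcomp_scaled_id_minus_Hol_disc:
  assumes "norm \<beta> \<le> 1" "m holomorphic_on ball 0 1" "f \<in> Hol_disc"
  shows "scaled_id_minus c (wcomp_op \<beta> m) f \<in> Hol_disc"
  using assms wcomp_op_Hol_disc by (intro scaled_id_minus_Hol_disc)

lemma wcomp_scaled_id_minus_inj:
  assumes "\<beta> ^ n = 1" "n > 0" "\<And>z. z \<in> ball 0 1 \<Longrightarrow> orbit_prod \<beta> m n z \<noteq> c ^ n"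
  shows "inj_on (scaled_id_minus c (wcomp_op \<beta> m)) Hol_disc"
proof (rule inj_onI)
  fix f g
  assume fg: "f \<in> Hol_disc" "g \<in> Hol_disc"
    "scaled_id_minus c (wcomp_op \<beta> m) f = scaled_id_minus c (wcomp_op \<beta> m) g"
  have "f z = g z" if "z \<in> ball 0 1" for z
    using wcomp_geom_sum_factorisation(1)[OF assms(1,2) that, of c m] assms(3)[OF that] fg(3)
    by (metis mult_cancel_left right_minus_eq)
  then show "f = g"
    using fg(1,2) by (rule Hol_disc_eqI[rotated 2])
qed

lemma wcomp_scaled_id_minus_surj:
  assumes "\<beta> ^ n = 1" "n > 0" "m holomorphic_on ball 0 1"
    and "\<And>z. z \<in> ball 0 1 \<Longrightarrow> orbit_prod \<beta> m n z \<noteq> c ^ n"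
  shows "Hol_disc \<subseteq> scaled_id_minus c (wcomp_op \<beta> m) ` Hol_disc"
proof
  let ?T = "wcomp_op \<beta> m"
  fix g assume g: "g \<in> Hol_disc"
  have norm: "norm \<beta> \<le> 1"
    using assms(1,2) norm_eq_1_if_power_eq_1 by simp
  define u where "u = restrict_disc (\<lambda>z. g z / (c ^ n - orbit_prod \<beta> m n z))"
  have "c ^ n - orbit_prod \<beta> m n z \<noteq> 0" if "z \<in> ball 0 1" for z
    using assms(4)[OF that] by simp
  then have "u \<in> Hol_disc"
    unfolding u_def using Hol_disc_holomorphic[OF g] orbit_prod_holomorphic[OF norm assms(3)]
    by (intro restrict_disc_in_Hol_disc holomorphic_intros) auto
  then have Su: "geom_sum_op c ?T n u \<in> Hol_disc"
    using norm assms(3) wcomp_op_Hol_disc by (intro geom_sum_op_Hol_disc)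
  have "scaled_id_minus c ?T (geom_sum_op c ?T n u) = g"
  proof (rule Hol_disc_eqI[OF wcomp_scaled_id_minus_Hol_disc[OF norm assms(3) Su] g])
    fix z :: complex assume "z \<in> ball 0 1"
    then show "scaled_id_minus c ?T (geom_sum_op c ?T n u) z = g z"
      using wcomp_geom_sum_factorisation(2)[OF assms(1,2)] assms(4)[of z]
      by (simp add: u_def restrict_disc_def)
  qed
  then show "g \<in> scaled_id_minus c ?T ` Hol_disc"
    using Su by blast
qed

lemma wcomp_scaled_id_minus_bij:
  assumes "\<beta> ^ n = 1" "n > 0" "m holomorphic_on ball 0 1"
    and "\<And>z. z \<in> ball 0 1 \<Longrightarrow> orbit_prod \<beta> m n z \<noteq> c ^ n"
  shows "bij_betw (scaled_id_minus c (wcomp_op \<beta> m)) Hol_disc Hol_disc"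
proof -
  have "norm \<beta> \<le> 1"
    using assms(1,2) norm_eq_1_if_power_eq_1 by simp
  then have "scaled_id_minus c (wcomp_op \<beta> m) ` Hol_disc \<subseteq> Hol_disc"
    using wcomp_scaled_id_minus_Hol_disc[OF _ assms(3)] by blast
  then show ?thesis
    using wcomp_scaled_id_minus_inj[OF assms(1,2,4)] wcomp_scaled_id_minus_surj[OF assms]
    by (simp add: bij_betw_def)
qed

lemma wcomp_scaled_id_minus_not_surj_orbit:
  assumes "\<beta> ^ n = 1" "n > 0" "c \<noteq> 0" "z\<^sub>0 \<in> ball 0 1" "c ^ n = orbit_prod \<beta> m n z\<^sub>0"
    and "\<And>k. k \<in> {1..<n} \<Longrightarrow> \<beta> ^ k * z\<^sub>0 \<noteq> z\<^sub>0"
  shows "\<not> Hol_disc \<subseteq> scaled_id_minus c (wcomp_op \<beta> m) ` Hol_disc"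
proof
  let ?T = "wcomp_op \<beta> m"
  have norm: "norm \<beta> \<le> 1"
    using assms(1,2) norm_eq_1_if_power_eq_1 by simp
  have "z\<^sub>0 \<notin> (\<lambda>k. \<beta> ^ k * z\<^sub>0) ` {1..<n}"
    using assms(6) by force
  then obtain g where g: "g \<in> Hol_disc" "g z\<^sub>0 \<noteq> 0"
    and g_orbit: "\<And>w. w \<in> (\<lambda>k. \<beta> ^ k * z\<^sub>0) ` {1..<n} \<Longrightarrow> g w = 0"
    using Hol_disc_separating_polynomial[OF assms(4) finite_imageI[OF finite_atLeastLessThan]]
    by blast
  assume "Hol_disc \<subseteq> scaled_id_minus c ?T ` Hol_disc"
  with g(1) obtain f where "g = scaled_id_minus c ?T f"
    by (auto elim: imageE)
  then have "geom_sum_op c ?T n g z\<^sub>0 = (c ^ n - orbit_prod \<beta> m n z\<^sub>0) * f z\<^sub>0"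
    by (simp add: wcomp_geom_sum_factorisation(1)[OF assms(1,2,4)])
  also have "\<dots> = 0"
    by (simp add: assms(5))
  finally have "geom_sum_op c ?T n g z\<^sub>0 = 0" .
  moreover have "c ^ (n - 1 - k) * (?T ^^ k) g z\<^sub>0 = (if k = 0 then c ^ (n - 1) * g z\<^sub>0 else 0)"
    if "k < n" for k
  proof (cases "k = 0")
    case False
    with that g_orbit[OF imageI, of k] show ?thesis
      by (simp add: funpow_wcomp_op[OF norm assms(4)])
  qed simp
  then have "geom_sum_op c ?T n g z\<^sub>0 = c ^ (n - 1) * g z\<^sub>0"
    using assms(2) by (simp add: geom_sum_op_def sum.delta')
  ultimately show False
    using assms(3) g(2) by simp
qed

lemma wcomp_scaled_id_minus_surj_rotate:
  assumes "norm \<beta> \<le> 1" "\<beta> \<noteq> 0" "m holomorphic_on ball 0 1" "\<beta> * c \<noteq> m 0"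
    and surj: "Hol_disc \<subseteq> scaled_id_minus (\<beta> * c) (wcomp_op \<beta> m) ` Hol_disc"
  shows "Hol_disc \<subseteq> scaled_id_minus c (wcomp_op \<beta> m) ` Hol_disc"
proof
  let ?T = "wcomp_op \<beta> m"
  fix g assume g: "g \<in> Hol_disc"
  have rotate: "scaled_id_minus (\<beta> * c) ?T (\<lambda>z. z * f z) z = \<beta> * z * scaled_id_minus c ?T f z" for f z
    by (simp add: scaled_id_minus_def wcomp_op_def algebra_simps)
  obtain u where u: "u \<in> Hol_disc" "scaled_id_minus (\<beta> * c) ?T u = (\<lambda>z. \<beta> * z * g z)"
    using surj Hol_disc_times_z[OF g] by (metis (no_types, lifting) imageE subsetD)
  have "(\<beta> * c - m 0) * u 0 = scaled_id_minus (\<beta> * c) ?T u 0"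
    by (simp add: scaled_id_minus_def wcomp_op_def algebra_simps)
  then have "(\<beta> * c - m 0) * u 0 = 0"
    using u(2) by simp
  then obtain f where f: "f \<in> Hol_disc" "u = (\<lambda>z. z * f z)"
    using Hol_disc_divide_z[OF u(1)] assms(4) by auto
  have "scaled_id_minus c ?T f = g"
  proof (rule Hol_disc_eq_if_eq_off_0)
    show "scaled_id_minus c ?T f \<in> Hol_disc"
      using assms(1,3) f(1) by (rule wcomp_scaled_id_minus_Hol_disc)
    fix z :: complex assume "z \<noteq> 0"
    then show "scaled_id_minus c ?T f z = g z"
      using u(2) f(2) rotate[of f z] assms(2) by (metis mult_cancel_left mult_eq_0_iff)
  qed (use g in simp)
  then show "g \<in> scaled_id_minus c ?T ` Hol_disc"
    using f(1) by blast
qed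

lemma wcomp_scaled_id_minus_not_surj_rotations:
  assumes "norm \<beta> \<le> 1" "\<beta> \<noteq> 0" "m holomorphic_on ball 0 1" "m 0 \<noteq> 0"
    and "\<And>k. k \<in> {1..j} \<Longrightarrow> \<beta> ^ k \<noteq> 1"
  shows "\<not> Hol_disc \<subseteq> scaled_id_minus (\<beta> ^ j * m 0) (wcomp_op \<beta> m) ` Hol_disc"
  using assms(5)
proof (induction j)
  case 0
  show ?case
    by (rule Hol_disc_not_surj_if_vanishing[of 0]) (simp_all add: scaled_id_minus_def wcomp_op_def)
next
  case (Suc j)
  have "\<beta> * (\<beta> ^ j * m 0) \<noteq> m 0"
    using Suc.prems[of "Suc j"] assms(4) by auto
  show ?case
  proof
    assume "Hol_disc \<subseteq> scaled_id_minus (\<beta> ^ Suc j * m 0) (wcomp_op \<beta> m) ` Hol_disc"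
    then have "Hol_disc \<subseteq> scaled_id_minus (\<beta> ^ j * m 0) (wcomp_op \<beta> m) ` Hol_disc"
      using wcomp_scaled_id_minus_surj_rotate[OF assms(1-3) \<open>\<beta> * (\<beta> ^ j * m 0) \<noteq> m 0\<close>]
      by (simp add: mult.assoc)
    with Suc show False
      by simp
  qed
qed

lemma power_eq_1_imp_primitive_root_power:
  fixes \<beta> x :: complex
  assumes "\<beta> ^ n = 1" "\<And>k. k \<in> {1..<n} \<Longrightarrow> \<beta> ^ k \<noteq> 1" "n > 0" "x ^ n = 1"
  shows "\<exists>j<n. x = \<beta> ^ j"
proof -
  have "\<beta> ^ i \<noteq> \<beta> ^ j" if "i < j" "j < n" for i j
  proof
    assume "\<beta> ^ i = \<beta> ^ j"
    moreover have "\<beta> ^ j = \<beta> ^ i * \<beta> ^ (j - i)"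
      using that(1) by (simp flip: power_add)
    ultimately have "\<beta> ^ i * \<beta> ^ (j - i) = \<beta> ^ i * 1"
      by simp
    then have "\<beta> ^ (j - i) = 1"
      using assms(1,3) by (metis mult_left_cancel power_0_left power_eq_0_iff zero_neq_one)
    moreover have "j - i \<in> {1..<n}"
      using that by auto
    ultimately show False
      using assms(2) by blast
  qed
  then have "inj_on (\<lambda>j. \<beta> ^ j) {..<n}"
    by (metis inj_onI lessThan_iff linorder_neqE_nat)
  then have "card ((\<lambda>j. \<beta> ^ j) ` {..<n}) = card {z::complex. z ^ n = 1}"
    using card_complex_roots_unity assms(3) by (simp add: card_image)
  moreover have "(\<lambda>j. \<beta> ^ j) ` {..<n} \<subseteq> {z. z ^ n = 1}"
    using assms(1) by (auto simp flip: power_mult simp: mult.commute[of _ n] power_mult)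
  moreover have "finite {z::complex. z ^ n = 1}"
    using card_complex_roots_unity assms(3) card_ge_0_finite by fastforce
  ultimately have "(\<lambda>j. \<beta> ^ j) ` {..<n} = {z. z ^ n = 1}"
    by (simp add: card_subset_eq)
  then show ?thesis
    using assms(4) by auto
qed

lemma wcomp_scaled_id_minus_not_surj:
  assumes "\<beta> ^ n = 1" "\<And>k. k \<in> {1..<n} \<Longrightarrow> \<beta> ^ k \<noteq> 1" "n > 0"
    and "m holomorphic_on ball 0 1" "z\<^sub>0 \<in> ball 0 1" "c ^ n = orbit_prod \<beta> m n z\<^sub>0"
  shows "\<not> Hol_disc \<subseteq> scaled_id_minus c (wcomp_op \<beta> m) ` Hol_disc"
proof -
  have norm: "norm \<beta> = 1"
    using assms(1,3) norm_eq_1_if_power_eq_1 by simp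
  consider "c = 0" | "c \<noteq> 0" "z\<^sub>0 \<noteq> 0" | "c \<noteq> 0" "z\<^sub>0 = 0"
    by blast
  then show ?thesis
  proof cases
    case 1
    then have "orbit_prod \<beta> m n z\<^sub>0 = 0"
      using assms(3,6) by (simp add: zero_power)
    then obtain i where "m (\<beta> ^ i * z\<^sub>0) = 0"
      by (auto simp: orbit_prod_def)
    moreover have "\<beta> ^ i * z\<^sub>0 \<in> ball 0 1"
      using assms(5) norm by (simp add: norm_mult norm_power)
    ultimately show ?thesis
      using 1 by (intro Hol_disc_not_surj_if_vanishing) (auto simp: scaled_id_minus_def wcomp_op_def)
  next
    case 2
    then show ?thesis
      using assms by (intro wcomp_scaled_id_minus_not_surj_orbit) auto
  next
    case 3
    then have "c ^ n = m 0 ^ n"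
      using assms(6) by (simp add: orbit_prod_def)
    then have "m 0 \<noteq> 0" "(c / m 0) ^ n = 1"
      using 3 assms(3) by (auto simp: power_divide zero_power)
    then obtain j where "j < n" "c = \<beta> ^ j * m 0"
      using power_eq_1_imp_primitive_root_power[OF assms(1-3)] by (metis nonzero_divide_eq_eq)
    moreover have "\<beta> ^ k \<noteq> 1" if "k \<in> {1..j}" for k
      using assms(2) that \<open>j < n\<close> by simp
    moreover have "\<beta> \<noteq> 0"
      using norm by auto
    ultimately show ?thesis
      using wcomp_scaled_id_minus_not_surj_rotations[OF _ _ assms(4) \<open>m 0 \<noteq> 0\<close>] norm by simp
  qed
qed

lemma spectrum_Hol_eq: "spectrum_Hol T = {c. \<not> bij_betw (scaled_id_minus c T) Hol_disc Hol_disc}"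
  by (simp add: spectrum_Hol_def scaled_id_minus_def[abs_def])

theorem proposition3p2:
  fixes \<beta> :: complex and N :: nat and m :: "complex \<Rightarrow> complex"
  assumes "N \<ge> 2" and "\<beta> ^ N = 1" and "\<forall>k\<in>{1..<N}. \<beta> ^ k \<noteq> 1"
    and "m holomorphic_on ball 0 1" and "\<exists>z\<in>ball 0 1. m z \<noteq> 0"
  shows "spectrum_Hol (wcomp_op \<beta> m) =
           {c. c ^ N \<in> (\<lambda>z. \<Prod>k<N. m (\<beta> ^ k * z)) ` ball 0 1}"
proof -
  have N: "N > 0"
    using assms(1) by simp
  have primitive: "\<And>k. k \<in> {1..<N} \<Longrightarrow> \<beta> ^ k \<noteq> 1"
    using assms(3) by blast
  have "\<not> bij_betw (scaled_id_minus c (wcomp_op \<beta> m)) Hol_disc Hol_disc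
          \<longleftrightarrow> c ^ N \<in> orbit_prod \<beta> m N ` ball 0 1" for c
  proof
    assume "\<not> bij_betw (scaled_id_minus c (wcomp_op \<beta> m)) Hol_disc Hol_disc"
    then show "c ^ N \<in> orbit_prod \<beta> m N ` ball 0 1"
      using wcomp_scaled_id_minus_bij[OF assms(2) N assms(4)] by (metis image_eqI)
  next
    assume "c ^ N \<in> orbit_prod \<beta> m N ` ball 0 1"
    then obtain z\<^sub>0 where z\<^sub>0: "z\<^sub>0 \<in> ball 0 1" "c ^ N = orbit_prod \<beta> m N z\<^sub>0"
      by blast
    have "\<not> Hol_disc \<subseteq> scaled_id_minus c (wcomp_op \<beta> m) ` Hol_disc"
      using wcomp_scaled_id_minus_not_surj[OF assms(2) primitive N assms(4) z\<^sub>0] .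
    then show "\<not> bij_betw (scaled_id_minus c (wcomp_op \<beta> m)) Hol_disc Hol_disc"
      by (auto simp: bij_betw_def)
  qed
  then show ?thesis
    by (simp add: spectrum_Hol_eq orbit_prod_def[abs_def])
qed

end
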